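(* Let $q$ be a prime power, $e\ge 2$, $r$ a positive integer, $a\in\mathbb{F}_{q^e}$ with $a\neq 0$, $f(x)=x^r(x^{q-1}+a)$, and $\ell=q^{e-1}+\cdots+q+1$. Suppose $(-a)^{\ell}\neq 1$ and $\gcd(r,q-1)=1$. (i) If $r\bmod\ell\in\{1,\ell-q\}$, then $f(x)$ permutes $\mathbb{F}_{q^e}$. (ii) If $e$ is odd and $r\bmod \ell\in\{q^{(e+1)/2}+1,\ \ell-q^{(e+1)/2}-q\}$, then $f(x)$ permutes $\mathbb{F}_{q^e}$.
   Context: $r\bmod\ell$ denotes the least nonnegative residue of $r$ modulo $\ell$. *)

theory Defs
  imports "HOL-Computational_Algebra.Primes"
begin

end

theory Submission
  imports Defs "HOL-Number_Theory.Residues"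
begin

text \<open>
  Let \<open>l = (q^e - 1) / (q - 1)\<close>, so that \<open>z \<mapsto> z^l\<close> maps the field into its
  subfield \<open>\<bbbF>\<^sub>q\<close> and \<open>(x^(q-1))^l = 1\<close> for \<open>x \<noteq> 0\<close>. Since \<open>f(c x) = c^r f(x)\<close>
  whenever \<open>c^(q-1) = 1\<close> and \<open>gcd(r, q - 1) = 1\<close>, the map \<open>f\<close> is injective as soon
  as \<open>f(x)^(q-1) = f(y)^(q-1)\<close> forces \<open>(y/x)^(q-1) = 1\<close>.

  Reducing \<open>r\<close> modulo \<open>l\<close> (and, when \<open>r \<equiv> -(K + q)\<close>, substituting \<open>x \<mapsto> 1/x\<close> and
  \<open>a \<mapsto> 1/a\<close>) replaces \<open>f(x)^(q-1)\<close> by \<open>g(x)^(q-1)\<close> with \<open>g(x) = x^K (x^q + b x)\<close>,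
  where \<open>K \<in> {0, q^m}\<close>, \<open>m = (e + 1)/2\<close>, satisfies \<open>t^(K+q) = (t^(K+1))^(q^j)\<close> for a
  suitable \<open>j\<close>. If \<open>g(y) = c g(x)\<close> with \<open>c \<in> \<bbbF>\<^sub>q\<close> and \<open>t = y/x\<close>, then
  \<open>x^(q-1) (t^(K+1) - c)^(q^j) = -b (t^(K+1) - c)\<close>; taking \<open>l\<close>-th powers yields
  \<open>(-b)^l = 1\<close> unless \<open>t^(K+1) = c\<close>, and then \<open>t^(K+q) = t^(K+1)\<close>, i.e. \<open>t^(q-1) = 1\<close>.
\<close>

lemma eq_one_if_powers_eq_one_coprime:
  fixes c :: "'a::monoid_mult"
  assumes "c ^ r = 1" and "c ^ m = 1" and "gcd r m = 1"
  shows "c = 1"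
proof (cases "r = 0")
  case True
  then show ?thesis
    using assms by simp
next
  case False
  obtain u v where "r * u = m * v + gcd r m"
    using bezout_nat[OF False] by blast
  then have "c ^ (r * u) = c ^ (m * v) * c"
    using assms(3) by (simp add: power_commutes)
  then show ?thesis
    using assms(1,2) by (simp add: power_mult)
qed

lemma power_eq_self_imp_power_power_eq_self:
  fixes z :: "'a::monoid_mult"
  assumes "z ^ q = z"
  shows "z ^ (q ^ j) = z"
  using assms by (induction j) (simp_all add: power_mult)

lemma diff_one_mult_sum_powers_nat:
  fixes q :: nat
  shows "(q - 1) * (\<Sum>i<n. q ^ i) = q ^ n - 1"
proof (cases "q = 0")
  case False
  have "int ((q - 1) * (\<Sum>i<n. q ^ i)) = (int q - 1) * (\<Sum>i<n. int q ^ i)"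
    using False by (simp add: of_nat_diff)
  also have "\<dots> = int q ^ n - 1"
    by (simp add: power_diff_1_eq)
  also have "\<dots> = int (q ^ n - 1)"
    using False by (simp add: of_nat_diff)
  finally show ?thesis
    by linarith
qed (simp add: power_0_left)

lemma power_Suc_mult_power_diff_one_add:
  fixes z b :: "'a::comm_ring_1"
  assumes "0 < q"
  shows "z ^ (K + 1) * (z ^ (q - 1) + b) = z ^ K * (z ^ q + b * z)"
  using assms by (cases q) (simp_all add: algebra_simps)

lemma card_field_ge_two: "2 \<le> card (UNIV :: 'a::{field,finite} set)"
proof -
  have "card {0::'a, 1} \<le> card (UNIV :: 'a set)"
    by (rule card_mono) auto
  then show ?thesis
    by simp
qed

lemma nonzero_power_card_minus_one:
  fixes x :: "'a::{field,finite}"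
  assumes "x \<noteq> 0"
  shows "x ^ (card (UNIV :: 'a set) - 1) = 1"
proof -
  let ?S = "UNIV - {0::'a}"
  have "x ^ card ?S * (\<Prod>y\<in>?S. y) = (\<Prod>y\<in>?S. x * y)"
    by (simp add: prod.distrib)
  also have "\<dots> = (\<Prod>y\<in>?S. y)"
    by (rule prod.reindex_bij_witness[of _ "\<lambda>y. y / x" "\<lambda>y. x * y"]) (use assms in auto)
  finally show ?thesis
    by (simp add: card_Diff_singleton)
qed

lemma power_card_eq_self:
  fixes x :: "'a::{field,finite}"
  shows "x ^ card (UNIV :: 'a set) = x"
proof (cases "x = 0")
  case False
  have "card (UNIV :: 'a set) = Suc (card (UNIV :: 'a set) - 1)"
    using finite_UNIV_card_ge_0[where 'a='a] by simp
  then show ?thesis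
    using nonzero_power_card_minus_one[OF False] by (metis mult.right_neutral power_Suc)
qed (use finite_UNIV_card_ge_0[where 'a='a] in auto)

lemma prime_CHAR_finite_field: "prime CHAR('a::{field,finite})"
  by (rule prime_CHAR_semidom) (simp add: finite_imp_CHAR_pos)

lemma CHAR_eq_if_card_eq_prime_power:
  assumes "prime p" and "card (UNIV :: 'a::{field,finite} set) = p ^ n"
  shows "CHAR('a) = p"
proof -
  have "CHAR('a) dvd p ^ n"
    using CHAR_dvd_CARD[where 'a='a] assms(2) by simp
  then have "CHAR('a) dvd p"
    using prime_CHAR_finite_field prime_dvd_power by blast
  then show ?thesis
    using assms(1) prime_CHAR_finite_field primes_dvd_imp_eq by blast
qed

lemma diff_power_CHAR_power:
  fixes u v :: "'a::{field,finite}"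
  assumes "q = CHAR('a) ^ k"
  shows "(u - v) ^ q = u ^ q - v ^ q"
  using freshmans_dream'[OF prime_CHAR_finite_field assms, of "u - v" v] by simp

lemma gt_one_if_diff_one_mult_eq_card:
  assumes "(q - 1) * l = card (UNIV :: 'a::{field,finite} set) - 1"
  shows "1 < q"
proof (rule ccontr)
  assume "\<not> 1 < q"
  then have "q - 1 = 0"
    by simp
  then show False
    using assms card_field_ge_two[where 'a='a] by simp
qed

lemma power_diff_one_power_eq_one:
  fixes x :: "'a::{field,finite}"
  assumes "(q - 1) * l = card (UNIV :: 'a set) - 1" and "x \<noteq> 0"
  shows "(x ^ (q - 1)) ^ l = 1"
  using nonzero_power_card_minus_one[OF assms(2)] assms(1) by (simp flip: power_mult)

lemma power_power_diff_one_mod: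
  fixes x :: "'a::{field,finite}"
  assumes "(q - 1) * l = card (UNIV :: 'a set) - 1" and "x \<noteq> 0"
  shows "(x ^ n) ^ (q - 1) = (x ^ (n mod l)) ^ (q - 1)"
proof -
  have "(x ^ n) ^ (q - 1) = ((x ^ (q - 1)) ^ l) ^ (n div l) * (x ^ (q - 1)) ^ (n mod l)"
    by (metis div_mult_mod_eq mult.commute power_add power_mult)
  also have "\<dots> = (x ^ (n mod l)) ^ (q - 1)"
    using power_diff_one_power_eq_one[OF assms] by (metis mult_1 power_one power_mult mult.commute)
  finally show ?thesis .
qed

lemma power_power_eq_self_if_diff_one_mult_eq:
  fixes z :: "'a::{field,finite}"
  assumes l: "(q - 1) * l = card (UNIV :: 'a set) - 1"
  shows "(z ^ l) ^ q = z ^ l"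
proof (cases "z = 0")
  case True
  have "0 < (q - 1) * l"
    using l card_field_ge_two[where 'a='a] by simp
  then show ?thesis
    using True by (simp add: power_0_left)
next
  case False
  have "l * q = (q - 1) * l + l"
    using gt_one_if_diff_one_mult_eq_card[OF l] by (cases q) (simp_all add: algebra_simps)
  then show ?thesis
    using power_diff_one_power_eq_one[OF l False] by (simp add: power_add flip: power_mult)
qed

lemma power_diff_one_add_neq_zero:
  fixes a x :: "'a::{field,finite}"
  assumes "(q - 1) * l = card (UNIV :: 'a set) - 1" and "(- a) ^ l \<noteq> 1" and "x \<noteq> 0"
  shows "x ^ (q - 1) + a \<noteq> 0"
proof
  assume "x ^ (q - 1) + a = 0"
  then have "x ^ (q - 1) = - a"
    by (simp add: eq_neg_iff_add_eq_0)
  then show False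
    using power_diff_one_power_eq_one[OF assms(1,3)] assms(2) by simp
qed

lemma eq_zero_if_power_diff_one_mult_power_eq:
  fixes b u x :: "'a::{field,finite}"
  assumes l: "(q - 1) * l = card (UNIV :: 'a set) - 1"
    and b: "(- b) ^ l \<noteq> 1" and x: "x \<noteq> 0"
    and eq: "x ^ (q - 1) * u ^ (q ^ j) = - b * u"
  shows "u = 0"
proof -
  have "(x ^ (q - 1)) ^ l * (u ^ l) ^ (q ^ j) = (- b) ^ l * u ^ l"
    using eq by (metis power_mult power_mult_distrib mult.commute)
  then have "u ^ l = (- b) ^ l * u ^ l"
    using power_diff_one_power_eq_one[OF l x]
      power_eq_self_imp_power_power_eq_self[OF power_power_eq_self_if_diff_one_mult_eq[OF l]]
    by simp
  then show ?thesis
    using b by simp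
qed

lemma linearized_binomial_power_diff_one_fiber:
  fixes b x y :: "'a::{field,finite}"
  assumes q: "q = CHAR('a) ^ k"
    and l: "(q - 1) * l = card (UNIV :: 'a set) - 1"
    and b: "(- b) ^ l \<noteq> 1"
    and K: "\<And>t::'a. t ^ (K + q) = (t ^ (K + 1)) ^ (q ^ j)"
    and x: "x \<noteq> 0" and y: "y \<noteq> 0"
    and eq: "(y ^ K * (y ^ q + b * y)) ^ (q - 1) = (x ^ K * (x ^ q + b * x)) ^ (q - 1)"
  shows "(y / x) ^ (q - 1) = 1"
proof -
  have "0 < q"
    using gt_one_if_diff_one_mult_eq_card[OF l] by simp
  note g = power_Suc_mult_power_diff_one_add[OF this, symmetric]
  have Kq: "z ^ (K + q) = z ^ (K + 1) * z ^ (q - 1)" for z :: 'a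
    using \<open>0 < q\<close> by (simp only: power_add[symmetric]) simp
  have g_nz: "z ^ (K + 1) * (z ^ (q - 1) + b) \<noteq> 0" if "z \<noteq> 0" for z :: 'a
    using power_diff_one_add_neq_zero[OF l b that] that by simp
  define c where "c = (y ^ (K + 1) * (y ^ (q - 1) + b)) / (x ^ (K + 1) * (x ^ (q - 1) + b))"
  define t where "t = y / x"
  have c_fixed: "c ^ (q ^ j) = c"
  proof -
    have "c ^ (q - 1) = 1"
      using eq g_nz[OF x] by (simp add: c_def g power_divide)
    then have "c ^ q = c"
      using \<open>0 < q\<close> by (cases q) auto
    then show ?thesis
      by (rule power_eq_self_imp_power_power_eq_self)
  qed
  have "y ^ (K + 1) * (y ^ (q - 1) + b) = c * (x ^ (K + 1) * (x ^ (q - 1) + b))"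
    using g_nz[OF x] by (simp add: c_def)
  moreover have "y ^ (K + 1) * y ^ (q - 1) = x ^ (K + 1) * x ^ (q - 1) * t ^ (K + q)"
    using x by (simp only: Kq[symmetric]) (simp add: t_def power_divide)
  ultimately have "x ^ (K + 1) * (x ^ (q - 1) * (t ^ (K + q) - c) + b * (t ^ (K + 1) - c)) = 0"
    using x by (simp add: t_def power_divide algebra_simps)
  moreover have "t ^ (K + q) - c = (t ^ (K + 1) - c) ^ (q ^ j)"
  proof -
    have "q ^ j = CHAR('a) ^ (k * j)"
      using q by (simp add: power_mult)
    from diff_power_CHAR_power[OF this] show ?thesis
      using c_fixed K[of t] by simp
  qed
  ultimately have "x ^ (q - 1) * (t ^ (K + 1) - c) ^ (q ^ j) = - b * (t ^ (K + 1) - c)"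
    using x by (simp add: eq_neg_iff_add_eq_0)
  then have "t ^ (K + 1) - c = 0"
    by (rule eq_zero_if_power_diff_one_mult_power_eq[OF l b x])
  then have "t ^ (K + q) = t ^ (K + 1)"
    using K[of t] c_fixed by simp
  then have "t ^ (K + 1) * t ^ (q - 1) = t ^ (K + 1)"
    by (simp only: Kq)
  then show ?thesis
    using x y by (simp add: t_def)
qed

lemma bij_power_mult_comp_power:
  fixes h :: "'a::{field,finite} \<Rightarrow> 'a"
  assumes r: "0 < r" and gcd: "gcd r m = 1"
    and h_nz: "\<And>x. x \<noteq> 0 \<Longrightarrow> h (x ^ m) \<noteq> 0"
    and fiber: "\<And>x y. x \<noteq> 0 \<Longrightarrow> y \<noteq> 0 \<Longrightarrow>
      (y ^ r * h (y ^ m)) ^ m = (x ^ r * h (x ^ m)) ^ m \<Longrightarrow> (y / x) ^ m = 1"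
  shows "bij (\<lambda>x. x ^ r * h (x ^ m))"
proof -
  have "inj (\<lambda>x. x ^ r * h (x ^ m))"
  proof (rule injI)
    fix x y :: 'a
    assume eq: "x ^ r * h (x ^ m) = y ^ r * h (y ^ m)"
    show "x = y"
    proof (cases "x = 0 \<or> y = 0")
      case True
      then show ?thesis
        using eq r h_nz by (metis mult_eq_0_iff power_eq_0_iff zero_power)
    next
      case False
      define c where "c = y / x"
      have c: "c ^ m = 1"
        using fiber eq False by (simp add: c_def)
      have y: "y = c * x"
        using False by (simp add: c_def)
      then have "y ^ r * h (y ^ m) = c ^ r * (x ^ r * h (x ^ m))"
        using c by (simp add: power_mult_distrib)
      then have "c ^ r = 1"
        using eq False h_nz by simp
      then show ?thesis
        using eq_one_if_powers_eq_one_coprime[OF _ c gcd] y by simp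
    qed
  qed
  then show ?thesis
    by (simp add: bij_def finite_UNIV_inj_surj)
qed

lemma power_diff_one_fiber_if_mod_eq:
  fixes a x y :: "'a::{field,finite}"
  assumes q: "q = CHAR('a) ^ k"
    and l: "(q - 1) * l = card (UNIV :: 'a set) - 1"
    and a: "(- a) ^ l \<noteq> 1"
    and K: "\<And>t::'a. t ^ (K + q) = (t ^ (K + 1)) ^ (q ^ j)"
    and r: "r mod l = K + 1"
    and x: "x \<noteq> 0" and y: "y \<noteq> 0"
    and eq: "(y ^ r * (y ^ (q - 1) + a)) ^ (q - 1) = (x ^ r * (x ^ (q - 1) + a)) ^ (q - 1)"
  shows "(y / x) ^ (q - 1) = 1"
proof -
  have "0 < q"
    using gt_one_if_diff_one_mult_eq_card[OF l] by simp
  have "(z ^ r * (z ^ (q - 1) + a)) ^ (q - 1) = (z ^ K * (z ^ q + a * z)) ^ (q - 1)"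
    if "z \<noteq> 0" for z :: 'a
    using power_power_diff_one_mod[OF l that, of r] r
      power_Suc_mult_power_diff_one_add[OF \<open>0 < q\<close>, of z K a]
    by (metis power_mult_distrib)
  then show ?thesis
    using linearized_binomial_power_diff_one_fiber[OF q l a K x y] eq x y by simp
qed

lemma power_diff_one_fiber_if_mod_add_eq:
  fixes a x y :: "'a::{field,finite}"
  assumes q: "q = CHAR('a) ^ k"
    and l: "(q - 1) * l = card (UNIV :: 'a set) - 1"
    and a0: "a \<noteq> 0" and a: "(- a) ^ l \<noteq> 1"
    and K: "\<And>t::'a. t ^ (K + q) = (t ^ (K + 1)) ^ (q ^ j)"
    and r: "r mod l + K + q = l"
    and x: "x \<noteq> 0" and y: "y \<noteq> 0"
    and eq: "(y ^ r * (y ^ (q - 1) + a)) ^ (q - 1) = (x ^ r * (x ^ (q - 1) + a)) ^ (q - 1)"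
  shows "(y / x) ^ (q - 1) = 1"
proof -
  define b where "b = inverse a"
  have b: "(- b) ^ l \<noteq> 1"
    using a by (simp add: b_def power_inverse flip: inverse_minus_eq)
  have "0 < q"
    using gt_one_if_diff_one_mult_eq_card[OF l] by simp
  have reduce: "(z ^ r * (z ^ (q - 1) + a)) ^ (q - 1)
      = a ^ (q - 1) * (inverse z ^ K * (inverse z ^ q + b * inverse z)) ^ (q - 1)"
    if z: "z \<noteq> 0" for z :: 'a
  proof -
    have "(z ^ (r mod l)) ^ (q - 1) * (z ^ (K + q)) ^ (q - 1) = (z ^ (q - 1)) ^ l"
      using r by (metis add.assoc power_add power_mult power_mult_distrib mult.commute)
    then have "(z ^ r) ^ (q - 1) = (inverse z ^ (K + q)) ^ (q - 1)"
      using power_power_diff_one_mod[OF l z, of r] power_diff_one_power_eq_one[OF l z] z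
      by (simp add: power_inverse field_simps)
    moreover have "inverse z ^ (K + q) * (z ^ (q - 1) + a)
        = a * (inverse z ^ K * (inverse z ^ q + b * inverse z))"
      using z a0 \<open>0 < q\<close> by (cases q) (simp_all add: b_def field_simps power_add)
    ultimately show ?thesis
      by (metis power_mult_distrib)
  qed
  have "(inverse y / inverse x) ^ (q - 1) = 1"
    using linearized_binomial_power_diff_one_fiber[OF q l b K, of "inverse x" "inverse y"]
      eq reduce[OF x] reduce[OF y] x y a0 by simp
  then show ?thesis
    using x y by (simp add: power_divide field_simps)
qed

lemma bij_power_mult_power_diff_one_add:
  fixes a :: "'a::{field,finite}"
  assumes q: "q = CHAR('a) ^ k"
    and l: "(q - 1) * l = card (UNIV :: 'a set) - 1"
    and a0: "a \<noteq> 0" and a: "(- a) ^ l \<noteq> 1"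
    and r0: "0 < r" and gcd: "gcd r (q - 1) = 1"
    and K: "\<And>t::'a. t ^ (K + q) = (t ^ (K + 1)) ^ (q ^ j)"
    and r: "r mod l = K + 1 \<or> r mod l + K + q = l"
  shows "bij (\<lambda>x. x ^ r * (x ^ (q - 1) + a))"
proof (rule bij_power_mult_comp_power[where h = "\<lambda>u. u + a", OF r0 gcd])
  show "x ^ (q - 1) + a \<noteq> 0" if "x \<noteq> 0" for x :: 'a
    using power_diff_one_add_neq_zero[OF l a that] .
  show "(y / x) ^ (q - 1) = 1"
    if "x \<noteq> 0" "y \<noteq> 0"
      "(y ^ r * (y ^ (q - 1) + a)) ^ (q - 1) = (x ^ r * (x ^ (q - 1) + a)) ^ (q - 1)"
    for x y :: 'a
    using r power_diff_one_fiber_if_mod_eq[OF q l a K _ that]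
      power_diff_one_fiber_if_mod_add_eq[OF q l a0 a K _ that] by blast
qed

lemma power_power_half_frobenius:
  fixes t :: "'a::{field,finite}"
  assumes "card (UNIV :: 'a set) = q ^ e" and "2 * m = e + 1"
  shows "t ^ (q ^ m + q) = (t ^ (q ^ m + 1)) ^ (q ^ m)"
proof -
  have "q ^ m * q ^ m = q ^ e * q"
    using assms(2) by (metis mult_2 power_add power_Suc2 Suc_eq_plus1)
  then have "(q ^ m + 1) * q ^ m = q ^ e * q + q ^ m"
    by (simp add: algebra_simps)
  then have "(t ^ (q ^ m + 1)) ^ (q ^ m) = (t ^ q ^ e) ^ q * t ^ q ^ m"
    by (metis power_add power_mult)
  then show ?thesis
    using power_card_eq_self[of t] assms(1) by (simp add: power_add)
qed

theorem corollary3p5: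
  fixes q e r :: nat and a :: "'a :: {field, finite}"
  assumes q_pp: "\<exists>p k. prime p \<and> k \<ge> 1 \<and> q = p ^ k"
    and card: "card (UNIV :: 'a set) = q ^ e"
    and e2: "e \<ge> 2"
    and rpos: "r > 0"
    and a0: "a \<noteq> 0"
    and hl: "(- a) ^ (\<Sum>i<e. q ^ i) \<noteq> 1"
    and hg: "gcd r (q - 1) = 1"
  shows "(r mod (\<Sum>i<e. q ^ i) \<in> {1, (\<Sum>i<e. q ^ i) - q}
            \<longrightarrow> bij (\<lambda>x::'a. x ^ r * (x ^ (q - 1) + a)))
       \<and> (odd e \<and> r mod (\<Sum>i<e. q ^ i) \<in>
              {q ^ ((e + 1) div 2) + 1, (\<Sum>i<e. q ^ i) - q ^ ((e + 1) div 2) - q}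
            \<longrightarrow> bij (\<lambda>x::'a. x ^ r * (x ^ (q - 1) + a)))"
proof -
  define l where "l = (\<Sum>i<e. q ^ i)"
  obtain p k where p: "prime p" and q_def: "q = p ^ k"
    using q_pp by blast
  have q: "q = CHAR('a) ^ k"
    using CHAR_eq_if_card_eq_prime_power[where 'a='a, OF p, of "k * e"] card q_def by (simp add: power_mult)
  have "(q - 1) * l = card (UNIV :: 'a set) - 1"
    unfolding l_def card by (rule diff_one_mult_sum_powers_nat)
  note bij = bij_power_mult_power_diff_one_add[OF q this a0 hl[folded l_def] rpos hg]
  have l_ge: "(\<Sum>i\<in>I. q ^ i) \<le> l" if "I \<subseteq> {..<e}" for I
    unfolding l_def using that by (intro sum_mono2) auto
  have "1 + q \<le> l"
    using l_ge[of "{0, 1}"] e2 by simp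
  then have "r mod l \<in> {1, l - q} \<longrightarrow> bij (\<lambda>x::'a. x ^ r * (x ^ (q - 1) + a))"
    using bij[of 0 1] by auto
  moreover have "odd e \<and> r mod l \<in> {q ^ ((e + 1) div 2) + 1, l - q ^ ((e + 1) div 2) - q}
      \<longrightarrow> bij (\<lambda>x::'a. x ^ r * (x ^ (q - 1) + a))"
  proof
    define m where "m = (e + 1) div 2"
    assume r: "odd e \<and> r mod l \<in> {q ^ m + 1, l - q ^ m - q}"
    then have "odd e"
      by simp
    then have m: "2 * m = e + 1" "2 \<le> m" "m < e"
      using e2 unfolding m_def by presburger+
    have "1 + q + q ^ m \<le> l"
      using l_ge[of "{0, 1, m}"] m by simp
    then have "r mod l = q ^ m + 1 \<or> r mod l + q ^ m + q = l"
      using r by auto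
    then show "bij (\<lambda>x::'a. x ^ r * (x ^ (q - 1) + a))"
      using bij power_power_half_frobenius[OF card m(1)] by blast
  qed
  ultimately show ?thesis
    unfolding l_def by blast
qed

end
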